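(* Consider the market and VCG mechanism described in the context, and let $\gamma>0$ be a weak-supermodularity constant of the market objective. Let $K\subseteq L$ and consider the profile $\mathcal{C}=\{c_l\}_{l\in L}$, where for $l\in K$ the function $c_l:\mathcal{X}_l\to\mathbb{R}_+$ is the true cost of bidder $l$ and for $l\notin K$ the function $c_l$ is an arbitrary fixed bid of bidder $l$ (not necessarily truthful). Assume the bidders in $K$ lose under $\mathcal{C}$, i.e. $x^*_l(\mathcal{C})=0$ for all $l\in K$. Let $\mathcal{B}_K=\{b_l\}_{l\in K}$ be any joint deviation, with each $b_l:\mathcal{X}_l\to\mathbb{R}_+$, $b_l(0)=0$, and let $\mathcal{B}=(\mathcal{C}_{-K},\mathcal{B}_K)$. Then $$\sum_{l\in K}u_l(\mathcal{B})\;\le\;\big[\gamma^{-1}-1\big]\big[J(\mathcal{C})-J(\mathcal{B})\big]\;\le\;\big[\gamma^{-1}-1\big]\big[J(\mathcal{C})-J(\mathcal{C}_{-K},\mathcal{B}^0_K)\big],$$ where $\mathcal{B}^0_K$ is the profile in which each $l\in K$ bids $b_l(x_l)=0$ for all $x_l\in\mathcal{X}_l$. (Since $u_l(\mathcal{C})=0$ for the losing bidders $l\in K$, this bounds the collective profit of the colluders $K$ from the deviation.)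
   Context: Market model. $L=\{1,\dots,|L|\}$ is a finite set of bidders and $t\ge1$ the number of types of supply. Bidder $l$ submits a bid function $b_l:\hat{\mathcal X}_l\to\mathbb{R}_+$ with $0\in\hat{\mathcal X}_l\subseteq\mathbb{R}^t_+$, $b_l(0)=0$; a bid profile is $\mathcal{B}=\{b_l\}_{l\in L}$. Fixed functions $d:\mathbb{R}^{t|L|}_+\times\mathbb{R}^p\to\mathbb{R}$ and $g:\mathbb{R}^{t|L|}_+\times\mathbb{R}^p\to\mathbb{R}^q$ are given. For $S\subseteq L$, $$J(\mathcal{B}_S)=\min\Big\{\sum_{l\in S}b_l(x_l)+d(x,y):\ x\in\textstyle\prod_{l\in L}\hat{\mathcal X}_l,\ y\in\mathbb{R}^p,\ g(x,y)\le0,\ x_l=0\ \forall l\notin S\Big\},$$ with value $+\infty$ if infeasible (minima are assumed attained when finite). Write $J(\mathcal{B})=J(\mathcal{B}_L)$ and $J(\mathcal{B}_{-K})=J(\mathcal{B}_{L\setminus K})$, $J(\mathcal{B}_{-l})=J(\mathcal{B}_{L\setminus\{l\}})$. $(x^*(\mathcal{B}),y^*(\mathcal{B}))$ denotes the minimizer for $S=L$ selected by a fixed tie-breaking rule. A mixed profile $(\mathcal{C}_{-K},\mathcal{B}_K)$ means bidders in $K$ use the functions in $\mathcal{B}_K$ and the others use those in $\mathcal{C}$. Standing assumption: for every profile considered, $J(\mathcal{B})<\infty$ and $J(\mathcal{B}_{-l})<\infty$ for every $l$. VCG mechanism (Clarke pivot): the payment to bidder $l$ is $p_l(\mathcal{B})=b_l(x^*_l(\mathcal{B}))+J(\mathcal{B}_{-l})-J(\mathcal{B})$,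 and the utility of bidder $l$ with true cost $c_l$ is $u_l(\mathcal{B})=p_l(\mathcal{B})-c_l(x^*_l(\mathcal{B}))$. Weak-supermodularity constant: $\gamma>0$ is such that for every bid profile $\mathcal{B}$ and all $K,S\subseteq L$ with $J(\mathcal{B}_{S\setminus K})<\infty$, $$\gamma\sum_{l\in K}\big[J(\mathcal{B}_{S\setminus\{l\}})-J(\mathcal{B}_S)\big]\le J(\mathcal{B}_{S\setminus K})-J(\mathcal{B}_S).$$ (The largest such $\gamma$ is the supermodularity ratio $\gamma_{\sup}$; the market objective is weakly supermodular if $\gamma_{\sup}>0$.) *)

theory Defs
  imports "HOL-Analysis.Analysis"
begin

text \<open>Bidders are the elements of a finite type 'l (so L = UNIV).
  Each bidder's allocation x_l lives in real^'t, the auxiliary variable y in real^'p,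
  and the constraint function g takes values in real^'q (g(x,y) <= 0 componentwise).
  A bid profile is a function b :: 'l => real^'t => real; only its values on X l matter.\<close>

type_synonym ('l, 't) alloc = "'l \<Rightarrow> real^'t"
type_synonym ('l, 't) profile = "'l \<Rightarrow> real^'t \<Rightarrow> real"

definition valid_domains :: "('l \<Rightarrow> (real^'t) set) \<Rightarrow> bool" where
  "valid_domains X \<longleftrightarrow> (\<forall>l. 0 \<in> X l \<and> X l \<subseteq> {v. \<forall>i. 0 \<le> v $ i})"

definition bid_profile :: "('l \<Rightarrow> (real^'t) set) \<Rightarrow> ('l, 't) profile \<Rightarrow> bool" where
  "bid_profile X b \<longleftrightarrow> (\<forall>l. b l 0 = 0 \<and> (\<forall>v\<in>X l. 0 \<le> b l v))"

definition feasible ::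
  "('l \<Rightarrow> (real^'t) set) \<Rightarrow> (('l, 't) alloc \<Rightarrow> real^'p \<Rightarrow> real^'q) \<Rightarrow> 'l set
     \<Rightarrow> ('l, 't) alloc \<Rightarrow> real^'p \<Rightarrow> bool" where
  "feasible X g S x y \<longleftrightarrow>
     (\<forall>l. x l \<in> X l) \<and> (\<forall>i. g x y $ i \<le> 0) \<and> (\<forall>l. l \<notin> S \<longrightarrow> x l = 0)"

definition objective ::
  "('l, 't) profile \<Rightarrow> (('l, 't) alloc \<Rightarrow> real^'p \<Rightarrow> real) \<Rightarrow> 'l set
     \<Rightarrow> ('l, 't) alloc \<Rightarrow> real^'p \<Rightarrow> real" where
  "objective b d S x y = (\<Sum>l\<in>S. b l (x l)) + d x y"

text \<open>J(B_S): infimum (a minimum under the attainment assumption) of the objective;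
  +infinity if infeasible.\<close>
definition Jm ::
  "('l \<Rightarrow> (real^'t) set) \<Rightarrow> (('l, 't) alloc \<Rightarrow> real^'p \<Rightarrow> real^'q)
     \<Rightarrow> (('l, 't) alloc \<Rightarrow> real^'p \<Rightarrow> real) \<Rightarrow> ('l, 't) profile \<Rightarrow> 'l set \<Rightarrow> ereal" where
  "Jm X g d b S =
     (INF xy \<in> {(x, y). feasible X g S x y}. ereal (objective b d S (fst xy) (snd xy)))"

text \<open>Real value of J (used only where J is finite).\<close>
definition Jr ::
  "('l \<Rightarrow> (real^'t) set) \<Rightarrow> (('l, 't) alloc \<Rightarrow> real^'p \<Rightarrow> real^'q)
     \<Rightarrow> (('l, 't) alloc \<Rightarrow> real^'p \<Rightarrow> real) \<Rightarrow> ('l, 't) profile \<Rightarrow> 'l set \<Rightarrow> real" where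
  "Jr X g d b S = real_of_ereal (Jm X g d b S)"

definition mixed :: "'l set \<Rightarrow> ('l, 't) profile \<Rightarrow> ('l, 't) profile \<Rightarrow> ('l, 't) profile" where
  "mixed K b c = (\<lambda>l. if l \<in> K then b l else c l)"

text \<open>VCG (Clarke pivot) payment and utility; xs is the fixed tie-breaking selection x^*(B).\<close>
definition vcg_payment ::
  "('l \<Rightarrow> (real^'t) set) \<Rightarrow> (('l, 't) alloc \<Rightarrow> real^'p \<Rightarrow> real^'q)
     \<Rightarrow> (('l, 't) alloc \<Rightarrow> real^'p \<Rightarrow> real) \<Rightarrow> (('l, 't) profile \<Rightarrow> ('l, 't) alloc)
     \<Rightarrow> ('l, 't) profile \<Rightarrow> 'l \<Rightarrow> real" where
  "vcg_payment X g d xs b l = b l (xs b l) + Jr X g d b (UNIV - {l}) - Jr X g d b UNIV"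

definition vcg_utility ::
  "('l \<Rightarrow> (real^'t) set) \<Rightarrow> (('l, 't) alloc \<Rightarrow> real^'p \<Rightarrow> real^'q)
     \<Rightarrow> (('l, 't) alloc \<Rightarrow> real^'p \<Rightarrow> real) \<Rightarrow> (('l, 't) profile \<Rightarrow> ('l, 't) alloc)
     \<Rightarrow> ('l, 't) profile \<Rightarrow> ('l, 't) profile \<Rightarrow> 'l \<Rightarrow> real" where
  "vcg_utility X g d xs b c l = vcg_payment X g d xs b l - c l (xs b l)"

definition weak_supermodular_const ::
  "('l \<Rightarrow> (real^'t) set) \<Rightarrow> (('l, 't) alloc \<Rightarrow> real^'p \<Rightarrow> real^'q)
     \<Rightarrow> (('l, 't) alloc \<Rightarrow> real^'p \<Rightarrow> real) \<Rightarrow> real \<Rightarrow> bool" where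
  "weak_supermodular_const X g d \<gamma> \<longleftrightarrow>
     (\<forall>b K S. bid_profile X b \<longrightarrow> Jm X g d b (S - K) < \<infinity> \<longrightarrow>
        ereal \<gamma> * (\<Sum>l\<in>K. Jm X g d b (S - {l}) - Jm X g d b S)
          \<le> Jm X g d b (S - K) - Jm X g d b S)"

end

theory Submission
  imports Defs
begin

text \<open>At the deviation profile B = (C_{-K}, B_K) with allocation x = x^*(B), the colluders' total
  utility is their total excess of bid over true cost at x plus the sum of their Clarke marginal
  contributions J(B_{-l}) - J(B). Since C is feasible at x, the excess is at most J(B) - J(C).
  Since the colluders lose under C, removing them does not change J, so J(B_{-K}) = J(C_{-K}) = J(C)
  and weak supermodularity bounds the marginal contributions by (J(C) - J(B))/\<gamma>.
  For the second inequality, J(B) \<ge> J(C_{-K}, B^0_K) because bids only decrease; when \<gamma> > 1 the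
  factor is negative, but then weak supermodularity forces every single-bidder marginal
  contribution to vanish, so J is constant along the removal of K and all three values coincide.\<close>

lemma Jm_le_objective:
  "feasible X g S x y \<Longrightarrow> Jm X g d P S \<le> ereal (objective P d S x y)"
  unfolding Jm_def by (rule INF_lower2[of "(x, y)"]) auto

lemma Jm_eq_Jr:
  assumes "\<exists>x y. feasible X g S x y \<and> ereal (objective P d S x y) = Jm X g d P S"
  shows "Jm X g d P S = ereal (Jr X g d P S)"
  using assms unfolding Jr_def by (metis real_of_ereal.simps(1))

lemma objective_eq_on_support:
  assumes "bid_profile X P" "S' \<subseteq> S" "\<forall>l. l \<notin> S' \<longrightarrow> x l = 0"
  shows "objective P d (S :: 'l::finite set) x y = objective P d S' x y"
proof -
  have "(\<Sum>l\<in>S. P l (x l)) = (\<Sum>l\<in>S'. P l (x l))"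
    by (rule sum.mono_neutral_right) (use assms in \<open>auto simp: bid_profile_def\<close>)
  then show ?thesis unfolding objective_def by simp
qed

lemma Jm_antimono:
  assumes "bid_profile X P" "S' \<subseteq> (S :: 'l::finite set)"
  shows "Jm X g d P S \<le> Jm X g d P S'"
  unfolding Jm_def[of X g d P S']
proof (rule INF_greatest, clarify)
  fix x y assume feas: "feasible X g S' x y"
  then have "feasible X g S x y" using assms(2) unfolding feasible_def by auto
  moreover have "objective P d S x y = objective P d S' x y"
    by (rule objective_eq_on_support) (use assms feas in \<open>auto simp: feasible_def\<close>)
  ultimately show "Jm X g d P S \<le> ereal (objective P d S' (fst (x, y)) (snd (x, y)))"
    using Jm_le_objective[of X g S x y d P] by simp
qed

lemma Jm_mono_profile:
  assumes "\<And>l v. l \<in> S \<Longrightarrow> v \<in> X l \<Longrightarrow> P l v \<le> Q l v"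
  shows "Jm X g d P S \<le> Jm X g d Q S"
  unfolding Jm_def objective_def
  by (rule INF_mono) (use assms in \<open>force simp: feasible_def intro: sum_mono\<close>)

lemma Jm_cong_on:
  assumes "\<forall>l\<in>S. P l = Q l"
  shows "Jm X g d P S = Jm X g d Q S"
  using assms unfolding Jm_def objective_def by (simp cong: sum.cong)

lemma bid_profile_mixed:
  assumes "bid_profile X c" "\<forall>l\<in>K. b l 0 = 0 \<and> (\<forall>v\<in>X l. 0 \<le> b l v)"
  shows "bid_profile X (mixed K b c)"
  using assms unfolding bid_profile_def mixed_def by auto

lemma Jm_remove_losers:
  assumes "bid_profile X P" "feasible X g UNIV x y"
    and "ereal (objective P d UNIV x y) = Jm X g d P UNIV" and "\<forall>l\<in>K. x l = 0"
  shows "Jm X g d P (UNIV - K) = Jm X g d P (UNIV :: 'l::finite set)"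
proof (rule antisym)
  have "feasible X g (UNIV - K) x y" using assms(2,4) unfolding feasible_def by auto
  moreover have "objective P d UNIV x y = objective P d (UNIV - K) x y"
    by (rule objective_eq_on_support) (use assms in auto)
  ultimately show "Jm X g d P (UNIV - K) \<le> Jm X g d P UNIV"
    using Jm_le_objective assms(3) by metis
qed (use Jm_antimono assms(1) in blast)

lemma Jm_mixed_remove_losers:
  assumes "bid_profile X c" "feasible X g UNIV x y"
    and "ereal (objective c d UNIV x y) = Jm X g d c UNIV" and "\<forall>l\<in>K. x l = 0"
  shows "Jm X g d (mixed K b c) (UNIV - K) = Jm X g d c (UNIV :: 'l::finite set)"
proof -
  have "Jm X g d (mixed K b c) (UNIV - K) = Jm X g d c (UNIV - K)"
    by (rule Jm_cong_on) (simp add: mixed_def)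
  also have "\<dots> = Jm X g d c UNIV" by (rule Jm_remove_losers[OF assms])
  finally show ?thesis .
qed

lemma objective_mixed_diff:
  fixes x :: "('l::finite, 't) alloc"
  shows "objective (mixed K b c) d UNIV x y - objective c d UNIV x y
     = (\<Sum>l\<in>K. b l (x l) - c l (x l))"
proof -
  have "objective P d UNIV x y = (\<Sum>l\<in>K. P l (x l)) + (\<Sum>l\<in>UNIV - K. P l (x l)) + d x y"
    for P
    unfolding objective_def by (simp add: sum.subset_diff[of K UNIV])
  then show ?thesis by (simp add: mixed_def sum_subtractf)
qed

lemma sum_vcg_utility_mixed:
  "(\<Sum>l\<in>K. vcg_utility X g d xs (mixed K b c) c l)
     = (\<Sum>l\<in>K. b l (xs (mixed K b c) l) - c l (xs (mixed K b c) l))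
       + (\<Sum>l\<in>K. Jr X g d (mixed K b c) (UNIV - {l}) - Jr X g d (mixed K b c) UNIV)"
  unfolding vcg_utility_def vcg_payment_def
  by (simp add: mixed_def sum.distrib[symmetric] algebra_simps cong: sum.cong)

lemma sum_marginal_contributions_le:
  assumes wsm: "weak_supermodular_const X g d \<gamma>" and "\<gamma> > 0" and "bid_profile X P"
    and fin_K: "Jm X g d P (UNIV - K) = ereal (Jr X g d P (UNIV - K))"
    and fin_UNIV: "Jm X g d P UNIV = ereal (Jr X g d P UNIV)"
    and fin_l: "\<And>l. Jm X g d P (UNIV - {l}) = ereal (Jr X g d P (UNIV - {l}))"
  shows "(\<Sum>l\<in>K. Jr X g d P (UNIV - {l}) - Jr X g d P UNIV)
           \<le> (Jr X g d P (UNIV - K) - Jr X g d P UNIV) / \<gamma>"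
proof -
  let ?R = "Jr X g d P"
  have "ereal \<gamma> * (\<Sum>l\<in>K. Jm X g d P (UNIV - {l}) - Jm X g d P UNIV)
          \<le> Jm X g d P (UNIV - K) - Jm X g d P UNIV"
    using wsm assms(3) fin_K unfolding weak_supermodular_const_def by (metis less_ereal.simps(4))
  also have "(\<Sum>l\<in>K. Jm X g d P (UNIV - {l}) - Jm X g d P UNIV)
               = ereal (\<Sum>l\<in>K. ?R (UNIV - {l}) - ?R UNIV)"
    by (simp add: fin_l fin_UNIV flip: sum_ereal)
  finally have "\<gamma> * (\<Sum>l\<in>K. ?R (UNIV - {l}) - ?R UNIV) \<le> ?R (UNIV - K) - ?R UNIV"
    using fin_K fin_UNIV by simp
  with \<open>\<gamma> > 0\<close> show ?thesis by (simp add: field_simps)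
qed

text \<open>With \<gamma> > 1, the case K = {k} of weak supermodularity reads
  \<gamma> (J(S - {k}) - J(S)) \<le> J(S - {k}) - J(S) for a nonnegative difference.\<close>

lemma Jm_remove_eq_if_gamma_gt_1:
  assumes wsm: "weak_supermodular_const X g d \<gamma>" and "\<gamma> > 1" and bp: "bid_profile X P"
    and attained: "\<forall>S. Jm X g d P S < \<infinity> \<longrightarrow>
        (\<exists>x y. feasible X g S x y \<and> ereal (objective P d S x y) = Jm X g d P S)"
    and "Jm X g d P (S - K) < \<infinity>"
  shows "Jm X g d P (S - K) = Jm X g d P (S :: 'l::finite set)"
proof -
  have "finite K" by simp
  then show ?thesis using assms(5)
  proof (induction K rule: finite_induct)
    case (insert k K)
    let ?J = "Jm X g d P" and ?R = "Jr X g d P"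
    have remove_k: "S - insert k K = (S - K) - {k}" by auto
    have fin_k: "?J (S - K - {k}) < \<infinity>" using insert.prems remove_k by simp
    have mono: "?J (S - K) \<le> ?J (S - K - {k})" by (rule Jm_antimono[OF bp]) auto
    with fin_k have fin: "?J (S - K) < \<infinity>" by (rule le_less_trans[rotated])
    have e1: "?J (S - K - {k}) = ereal (?R (S - K - {k}))"
      using attained fin_k by (intro Jm_eq_Jr) blast
    have e2: "?J (S - K) = ereal (?R (S - K))"
      using attained fin by (intro Jm_eq_Jr) blast
    have "ereal \<gamma> * (\<Sum>l\<in>{k}. ?J (S - K - {l}) - ?J (S - K)) \<le> ?J (S - K - {k}) - ?J (S - K)"
      using wsm bp fin_k unfolding weak_supermodular_const_def by blast
    then have "(\<gamma> - 1) * (?R (S - K - {k}) - ?R (S - K)) \<le> 0"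
      using e1 e2 by (simp add: algebra_simps)
    moreover have "?R (S - K) \<le> ?R (S - K - {k})" using mono e1 e2 by simp
    ultimately have "?R (S - K - {k}) = ?R (S - K)"
      using \<open>\<gamma> > 1\<close> by (simp add: mult_le_0_iff)
    then show ?case using e1 e2 insert.IH fin remove_k by simp
  qed simp
qed

theorem theorem1:
  fixes X :: "'l::finite \<Rightarrow> (real^'t) set"
    and g :: "('l, 't) alloc \<Rightarrow> real^'p \<Rightarrow> real^'q"
    and d :: "('l, 't) alloc \<Rightarrow> real^'p \<Rightarrow> real"
    and xs :: "('l, 't) profile \<Rightarrow> ('l, 't) alloc"
    and ys :: "('l, 't) profile \<Rightarrow> real^'p"
    and \<gamma> :: real
    and K :: "'l set"
    and c b :: "('l, 't) profile"
  assumes domains: "valid_domains X"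
    and attained: "\<forall>bp S. bid_profile X bp \<and> Jm X g d bp S < \<infinity> \<longrightarrow>
        (\<exists>x y. feasible X g S x y \<and> ereal (objective bp d S x y) = Jm X g d bp S)"
    and tie_breaking: "\<forall>bp. bid_profile X bp \<and> Jm X g d bp UNIV < \<infinity> \<longrightarrow>
        feasible X g UNIV (xs bp) (ys bp) \<and>
        ereal (objective bp d UNIV (xs bp) (ys bp)) = Jm X g d bp UNIV"
    and gamma_pos: "\<gamma> > 0"
    and wsm: "weak_supermodular_const X g d \<gamma>"
    and C_profile: "bid_profile X c"
    and B_bids: "\<forall>l\<in>K. b l 0 = 0 \<and> (\<forall>v\<in>X l. 0 \<le> b l v)"
    and losers: "\<forall>l\<in>K. xs c l = 0"
    and standing: "\<forall>P\<in>{c, mixed K b c, mixed K (\<lambda>_ _. 0) c}.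
        Jm X g d P UNIV < \<infinity> \<and> (\<forall>l. Jm X g d P (UNIV - {l}) < \<infinity>)"
  shows "(\<Sum>l\<in>K. vcg_utility X g d xs (mixed K b c) c l)
           \<le> (1 / \<gamma> - 1) * (Jr X g d c UNIV - Jr X g d (mixed K b c) UNIV)
       \<and> (1 / \<gamma> - 1) * (Jr X g d c UNIV - Jr X g d (mixed K b c) UNIV)
           \<le> (1 / \<gamma> - 1) * (Jr X g d c UNIV - Jr X g d (mixed K (\<lambda>_ _. 0) c) UNIV)"
proof -
  define B where "B = mixed K b c"
  define Z where "Z = mixed K (\<lambda>_ _. 0 :: real) c"
  let ?J = "Jm X g d" and ?R = "Jr X g d"
  have bpB: "bid_profile X B" and bpZ: "bid_profile X Z"
    using bid_profile_mixed[OF C_profile] B_bids unfolding B_def Z_def by auto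
  have fin: "?J P S = ereal (?R P S)" if "bid_profile X P" "?J P S < \<infinity>" for P S
    using attained that by (intro Jm_eq_Jr) blast
  have standing': "\<forall>P\<in>{c, B, Z}. ?J P UNIV < \<infinity> \<and> (\<forall>l. ?J P (UNIV - {l}) < \<infinity>)"
    using standing unfolding B_def Z_def .
  have optC: "feasible X g UNIV (xs c) (ys c)" "ereal (objective c d UNIV (xs c) (ys c)) = ?J c UNIV"
    and optB: "feasible X g UNIV (xs B) (ys B)" "ereal (objective B d UNIV (xs B) (ys B)) = ?J B UNIV"
    using tie_breaking C_profile bpB standing' by auto
  have JBK: "?J B (UNIV - K) = ?J c UNIV" and JZK: "?J Z (UNIV - K) = ?J c UNIV"
    using Jm_mixed_remove_losers[OF C_profile optC] losers unfolding B_def Z_def by auto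
  have RC: "?J c UNIV = ereal (?R c UNIV)" and RB: "?J B UNIV = ereal (?R B UNIV)"
    and RZ: "?J Z UNIV = ereal (?R Z UNIV)" and RBl: "\<And>l. ?J B (UNIV - {l}) = ereal (?R B (UNIV - {l}))"
    using fin C_profile bpB bpZ standing' by auto
  have "?R c UNIV \<le> objective c d UNIV (xs B) (ys B)"
    using Jm_le_objective[OF optB(1), where P = c and d = d] RC by simp
  then have excess: "(\<Sum>l\<in>K. b l (xs B l) - c l (xs B l)) \<le> ?R B UNIV - ?R c UNIV"
    using objective_mixed_diff[of K b c d "xs B" "ys B"] optB(2) RB unfolding B_def by simp
  have marginals: "(\<Sum>l\<in>K. ?R B (UNIV - {l}) - ?R B UNIV) \<le> (?R c UNIV - ?R B UNIV) / \<gamma>"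
    using sum_marginal_contributions_le[OF wsm gamma_pos bpB _ RB RBl, of K] JBK RC
    by (metis Jr_def)
  have first: "(\<Sum>l\<in>K. vcg_utility X g d xs B c l) \<le> (1 / \<gamma> - 1) * (?R c UNIV - ?R B UNIV)"
    using sum_vcg_utility_mixed[of X g d xs K b c] excess marginals unfolding B_def
    by (simp add: algebra_simps diff_divide_distrib)
  have "?J Z UNIV \<le> ?J B UNIV"
    by (rule Jm_mono_profile) (use B_bids in \<open>auto simp: B_def Z_def mixed_def\<close>)
  then have ZB: "?R Z UNIV \<le> ?R B UNIV" using RZ RB by simp
  have "?J B UNIV \<le> ?J B (UNIV - K)" by (rule Jm_antimono[OF bpB]) auto
  then have BC: "?R B UNIV \<le> ?R c UNIV" using JBK RB RC by simp
  have second: "(1 / \<gamma> - 1) * (?R c UNIV - ?R B UNIV) \<le> (1 / \<gamma> - 1) * (?R c UNIV - ?R Z UNIV)"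
  proof (cases "\<gamma> \<le> 1")
    case True
    then have "0 \<le> 1 / \<gamma> - 1" using gamma_pos by (simp add: field_simps)
    then show ?thesis using ZB by (intro mult_left_mono) auto
  next
    case False
    have "?J Z UNIV = ?J Z (UNIV - K)"
      using Jm_remove_eq_if_gamma_gt_1[OF wsm _ bpZ, of UNIV K] False attained bpZ JZK RC
      by auto
    then show ?thesis using JZK RZ RC ZB BC by simp
  qed
  show ?thesis using first second unfolding B_def Z_def by simp
qed

end
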